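(* The pair $(\tau_1,\tau_2)$ on $H^2_{\mathbb D^2}$ has joint spectrum $\sigma(\tau_1,\tau_2)=\overline{\mathbb D^2}$. Moreover, for every point $(\lambda_1,\lambda_2)\in\mathbb D^2$, the non-singularity of the Koszul complex of $(\tau_1-\lambda_1I,\tau_2-\lambda_2I)$ breaks at stage 2.
   Context: $H^2_{\mathbb D^2}$ is the Hardy space of the bidisc with orthonormal basis $\{z_1^{m_1}z_2^{m_2}\}_{m_1,m_2\ge0}$, and $M_{z_1},M_{z_2}$ are the coordinate multiplication operators. $U$ is the unitary on $H^2_{\mathbb D^2}$ with $U(z_1^{m_1}z_2^{m_2})=z_1^{m_1+2}z_2^{m_2}$ if $m_1\ge m_2$, $=z_1^{m_1+1}z_2^{m_2-1}$ if $m_1+1=m_2$, $=z_1^{m_1}z_2^{m_2-2}$ if $m_1+2\le m_2$; $\tau_1=U^*M_{z_1}$, $\tau_2=M_{z_2}U$. Koszul complex of commuting $T_1,T_2$ on $\mathcal H$: $0\xrightarrow{\delta_0}\mathcal H\xrightarrow{\delta_1}\mathcal H\oplus\mathcal H\xrightarrow{\delta_2}\mathcal H\xrightarrow{\delta_3}0$, $\delta_1h=(T_1h,T_2h)$, $\delta_2(h_1,h_2)=T_1h_2-T_2h_1$; the Taylor joint spectrum is the set of $(\lambda_1,\lambda_2)$ where the complex of $(T_1-\lambda_1I,T_2-\lambda_2I)$ is not exact; the non-singularity breaks at stage $n$ if $\operatorname{ran}\delta_{n-1}\neq\ker\delta_n$. *)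

theory Defs
  imports "HOL-Analysis.Analysis"
begin

text \<open>Model of the Hardy space of the bidisc: a function f is identified with its
  coefficient family (f(m1,m2)) w.r.t. the orthonormal basis z1^m1 z2^m2, so
  H^2 is the space of square-summable families indexed by nat x nat.\<close>

type_synonym vec = "nat \<times> nat \<Rightarrow> complex"

definition H2 :: "vec set" where
  "H2 = {f. (\<lambda>k. (cmod (f k))^2) summable_on UNIV}"

text \<open>Coordinate multiplications: M_z1 (z1^m1 z2^m2) = z1^(m1+1) z2^m2, etc.\<close>
definition Mz1 :: "vec \<Rightarrow> vec" where
  "Mz1 f = (\<lambda>(m1, m2). if m1 = 0 then 0 else f (m1 - 1, m2))"

definition Mz2 :: "vec \<Rightarrow> vec" where
  "Mz2 f = (\<lambda>(m1, m2). if m2 = 0 then 0 else f (m1, m2 - 1))"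

definition sigma :: "nat \<times> nat \<Rightarrow> nat \<times> nat" where
  "sigma = (\<lambda>(m1, m2). if m2 \<le> m1 then (m1 + 2, m2)
                        else if m1 + 1 = m2 then (m1 + 1, m2 - 1)
                        else (m1, m2 - 2))"

text \<open>U e_k = e_(sigma k) means (U f)(sigma k) = f k, i.e. U f = f o sigma^-1;
  its adjoint (= inverse) is f o sigma.\<close>
definition U :: "vec \<Rightarrow> vec" where
  "U f = f \<circ> inv sigma"

definition Uadj :: "vec \<Rightarrow> vec" where
  "Uadj f = f \<circ> sigma"

definition tau1 :: "vec \<Rightarrow> vec" where
  "tau1 f = Uadj (Mz1 f)"

definition tau2 :: "vec \<Rightarrow> vec" where
  "tau2 f = Mz2 (U f)"

definition shiftop :: "(vec \<Rightarrow> vec) \<Rightarrow> complex \<Rightarrow> vec \<Rightarrow> vec" where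
  "shiftop T l h = (\<lambda>k. T h k - l * h k)"

text \<open>Koszul complex  0 -d0-> H -d1-> H+H -d2-> H -d3-> 0.\<close>
definition kdelta1 :: "(vec \<Rightarrow> vec) \<Rightarrow> (vec \<Rightarrow> vec) \<Rightarrow> vec \<Rightarrow> vec \<times> vec" where
  "kdelta1 T1 T2 h = (T1 h, T2 h)"

definition kdelta2 :: "(vec \<Rightarrow> vec) \<Rightarrow> (vec \<Rightarrow> vec) \<Rightarrow> vec \<times> vec \<Rightarrow> vec" where
  "kdelta2 T1 T2 p = (\<lambda>k. T1 (snd p) k - T2 (fst p) k)"

text \<open>Non-singularity breaks at stage n iff ran delta_(n-1) \<noteq> ker delta_n.\<close>
definition koszul_breaks_at ::
  "vec set \<Rightarrow> (vec \<Rightarrow> vec) \<Rightarrow> (vec \<Rightarrow> vec) \<Rightarrow> nat \<Rightarrow> bool" where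
  "koszul_breaks_at H T1 T2 n =
     (if n = 1 then {(\<lambda>_. 0)} \<noteq> {h \<in> H. kdelta1 T1 T2 h = ((\<lambda>_. 0), (\<lambda>_. 0))}
      else if n = 2 then kdelta1 T1 T2 ` H \<noteq> {p \<in> H \<times> H. kdelta2 T1 T2 p = (\<lambda>_. 0)}
      else if n = 3 then kdelta2 T1 T2 ` (H \<times> H) \<noteq> H
      else False)"

definition koszul_exact :: "vec set \<Rightarrow> (vec \<Rightarrow> vec) \<Rightarrow> (vec \<Rightarrow> vec) \<Rightarrow> bool" where
  "koszul_exact H T1 T2 = (\<forall>n. \<not> koszul_breaks_at H T1 T2 n)"

definition taylor_spectrum ::
  "vec set \<Rightarrow> (vec \<Rightarrow> vec) \<Rightarrow> (vec \<Rightarrow> vec) \<Rightarrow> (complex \<times> complex) set" where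
  "taylor_spectrum H T1 T2 =
     {(l1, l2). \<not> koszul_exact H (shiftop T1 l1) (shiftop T2 l2)}"

end

theory Submission
  imports Defs
begin

(*
  Outside the closed bidisc, say |l1| > 1: tau1 is a composition operator f |-> f o t (set to 0
  off the domain of an injective index map t), hence a contraction, so tau1 - l1 is invertible on
  H2 by a Neumann series; a Koszul complex whose first entry is invertible and commutes with the
  second one is exact.

  Inside the open bidisc, x = sum_m l1^m e_(m,0) and z = sum_j l2^j e_(0,j+2) satisfy
  (tau1 - l1) x = (tau2 - l2) z = e_(0,1), so (z, x) is a cycle at stage 2. It is not a boundary:
  along the points (n, 2n+2) tau1 is a forward shift, and (tau1 - l1) h = z would force |h| >= 1
  there.

  On the boundary, say |l2| = 1, on the grid (a, 2a+2+j) tau1 is a forward shift in a and tau2 a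
  backward shift in j. Take g supported on a = 0 with values -l2^(j+1) (j+1)^(-3/4). Summing
  (tau1 - l1) h2 - (tau2 - l2) h1 = g against l1^a over a <= M yields a twisted telescoping relation
  in j whose error terms are the values of h2 on the row a = M. The forcing term is square-summable
  but its partial sums grow like I^(1/4); by Cauchy-Schwarz the row M of h2 must carry square norm
  at least of order 1/(M+1), and the harmonic series diverges.
*)

section \<open>The index permutation and the two operators\<close>

definition sigma_inv :: "nat \<times> nat \<Rightarrow> nat \<times> nat" where
  "sigma_inv = (\<lambda>(a, b). if b + 2 \<le> a then (a - 2, b)
                         else if b + 1 = a then (b, a)
                         else (a, b + 2))"

lemma sigma_sigma_inv [simp]: "sigma (sigma_inv p) = p"
  by (cases p) (auto simp: sigma_def sigma_inv_def)

lemma sigma_inv_sigma [simp]: "sigma_inv (sigma p) = p"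
  by (cases p) (auto simp: sigma_def sigma_inv_def)

lemma inv_sigma: "inv sigma = sigma_inv"
  by (rule inv_equality) simp_all

lemma tau1_apply:
  "tau1 f (m1, m2) =
     (if m2 \<le> m1 then f (m1 + 1, m2)
      else if m2 = m1 + 1 then f (m1, m1)
      else if m1 = 0 then 0 else f (m1 - 1, m2 - 2))"
  by (auto simp: tau1_def Uadj_def Mz1_def sigma_def)

lemma tau2_apply:
  "tau2 f (m1, m2) =
     (if m2 = 0 then 0
      else if m2 < m1 then f (m1 - 2, m2 - 1)
      else if m1 = m2 then f (m1 - 1, m1)
      else f (m1, m2 + 1))"
  by (auto simp: tau2_def U_def Mz2_def inv_sigma sigma_inv_def)

lemma tau1_tau2_commute: "tau1 (tau2 f) = tau2 (tau1 f)"
proof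
  fix p :: "nat \<times> nat"
  obtain m1 m2 where "p = (m1, m2)" by fastforce
  then show "tau1 (tau2 f) p = tau2 (tau1 f) p"
    by (auto simp: tau1_apply tau2_apply intro!: arg_cong[of _ _ f])
qed

definition comp_op :: "(nat \<times> nat \<Rightarrow> bool) \<Rightarrow> (nat \<times> nat \<Rightarrow> nat \<times> nat) \<Rightarrow> vec \<Rightarrow> vec" where
  "comp_op P t f = (\<lambda>p. if P p then f (t p) else 0)"

lemma tau1_eq_comp_op:
  "tau1 = comp_op (\<lambda>p. fst (sigma p) \<noteq> 0) (\<lambda>p. (fst (sigma p) - 1, snd (sigma p)))"
  by (auto simp: fun_eq_iff tau1_def Uadj_def Mz1_def comp_op_def split: prod.splits)

lemma inj_on_tau1_index:
  "inj_on (\<lambda>p. (fst (sigma p) - 1, snd (sigma p))) {p. fst (sigma p) \<noteq> 0}"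
proof (rule inj_onI)
  fix p q
  assume "p \<in> {p. fst (sigma p) \<noteq> 0}" "q \<in> {p. fst (sigma p) \<noteq> 0}"
    and "(fst (sigma p) - 1, snd (sigma p)) = (fst (sigma q) - 1, snd (sigma q))"
  then have "sigma p = sigma q" by (simp add: prod_eq_iff) arith
  then show "p = q" by (metis sigma_inv_sigma)
qed

lemma tau2_eq_comp_op: "tau2 = comp_op (\<lambda>p. snd p \<noteq> 0) (\<lambda>p. sigma_inv (fst p, snd p - 1))"
  by (auto simp: fun_eq_iff tau2_def U_def Mz2_def comp_op_def inv_sigma)

lemma inj_on_tau2_index: "inj_on (\<lambda>p. sigma_inv (fst p, snd p - 1)) {p. snd p \<noteq> 0}"
proof (rule inj_onI)
  fix p q :: "nat \<times> nat"
  assume "p \<in> {p. snd p \<noteq> 0}" "q \<in> {p. snd p \<noteq> 0}"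
    and "sigma_inv (fst p, snd p - 1) = sigma_inv (fst q, snd q - 1)"
  then have "(fst p, snd p - 1) = (fst q, snd q - 1)"
    by (metis sigma_sigma_inv)
  with \<open>p \<in> _\<close> \<open>q \<in> _\<close> show "p = q" by (auto simp: prod_eq_iff)
qed

section \<open>The Hardy space of the bidisc\<close>

definition sq_norm :: "vec \<Rightarrow> real" where
  "sq_norm f = infsum (\<lambda>k. (cmod (f k))^2) UNIV"

lemma sq_norm_nonneg: "0 \<le> sq_norm f"
  by (simp add: sq_norm_def infsum_nonneg)

lemma H2I: "(\<And>F. finite F \<Longrightarrow> (\<Sum>k\<in>F. (cmod (f k))^2) \<le> B) \<Longrightarrow> f \<in> H2"
  unfolding H2_def mem_Collect_eq
  by (rule nonneg_bdd_above_summable_on) (auto intro!: bdd_aboveI[of _ B])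

lemma sq_norm_le:
  "f \<in> H2 \<Longrightarrow> (\<And>F. finite F \<Longrightarrow> (\<Sum>k\<in>F. (cmod (f k))^2) \<le> B) \<Longrightarrow> sq_norm f \<le> B"
  unfolding H2_def sq_norm_def by (auto intro: infsum_le_finite_sums)

lemma sum_le_sq_norm: "f \<in> H2 \<Longrightarrow> finite F \<Longrightarrow> (\<Sum>k\<in>F. (cmod (f k))^2) \<le> sq_norm f"
  unfolding H2_def sq_norm_def by (intro finite_sum_le_infsum) auto

lemma sum_reindex_le_sq_norm:
  assumes "f \<in> H2" "inj_on \<phi> A" "finite A"
  shows "(\<Sum>a\<in>A. (cmod (f (\<phi> a)))^2) \<le> sq_norm f"
  using sum_le_sq_norm[of f "\<phi> ` A"] assms by (simp add: sum.reindex)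

lemma norm_le_sqrt_sq_norm: "f \<in> H2 \<Longrightarrow> cmod (f k) \<le> sqrt (sq_norm f)"
  using sum_le_sq_norm[of f "{k}"] by (simp add: real_le_rsqrt)

lemma sq_norm_eq_0: "f \<in> H2 \<Longrightarrow> sq_norm f = 0 \<Longrightarrow> f = (\<lambda>_. 0)"
  using norm_le_sqrt_sq_norm by fastforce

lemma sq_norm_scale: "sq_norm (\<lambda>k. c * f k) = (cmod c)^2 * sq_norm f"
  by (simp add: sq_norm_def norm_mult power_mult_distrib infsum_cmult_right')

lemma H2_zero: "(\<lambda>_. 0) \<in> H2"
  by (rule H2I[where B = 0]) simp

lemma H2_scale: "f \<in> H2 \<Longrightarrow> (\<lambda>k. c * f k) \<in> H2"
  by (rule H2I[where B = "(cmod c)^2 * sq_norm f"])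
    (simp add: norm_mult power_mult_distrib sum_le_sq_norm mult_left_mono flip: sum_distrib_left)

lemma H2_uminus: "f \<in> H2 \<Longrightarrow> (\<lambda>k. - f k) \<in> H2"
  using H2_scale[of f "-1"] by simp

lemma H2_diff:
  assumes "f \<in> H2" "g \<in> H2"
  shows "(\<lambda>k. f k - g k) \<in> H2"
proof (rule H2I[where B = "2 * sq_norm f + 2 * sq_norm g"])
  fix F :: "(nat \<times> nat) set"
  assume F: "finite F"
  have "(cmod (a - b))^2 \<le> 2 * (cmod a)^2 + 2 * (cmod b)^2" for a b :: complex
  proof -
    have "(cmod (a - b))^2 \<le> (cmod a + cmod b)^2"
      by (simp add: norm_triangle_ineq4 power_mono)
    also have "\<dots> \<le> 2 * (cmod a)^2 + 2 * (cmod b)^2"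
      using zero_le_power2[of "cmod a - cmod b"] by (simp add: power2_eq_square algebra_simps)
    finally show ?thesis .
  qed
  then have "(\<Sum>k\<in>F. (cmod (f k - g k))^2)
      \<le> (\<Sum>k\<in>F. 2 * (cmod (f k))^2 + 2 * (cmod (g k))^2)"
    by (intro sum_mono)
  also have "\<dots> = 2 * (\<Sum>k\<in>F. (cmod (f k))^2) + 2 * (\<Sum>k\<in>F. (cmod (g k))^2)"
    by (simp add: sum.distrib sum_distrib_left)
  also have "\<dots> \<le> 2 * sq_norm f + 2 * sq_norm g"
    using sum_le_sq_norm[OF assms(1) F] sum_le_sq_norm[OF assms(2) F] by simp
  finally show "(\<Sum>k\<in>F. (cmod (f k - g k))^2) \<le> 2 * sq_norm f + 2 * sq_norm g" .
qed

lemma H2_supported_on_range: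
  assumes "inj \<phi>" "summable (\<lambda>j. (cmod (a j))^2)"
    and "\<And>p. p \<notin> range \<phi> \<Longrightarrow> f p = 0" "\<And>j. f (\<phi> j) = a j"
  shows "f \<in> H2"
proof (rule H2I[where B = "\<Sum>j. (cmod (a j))^2"])
  fix F :: "(nat \<times> nat) set"
  assume F: "finite F"
  have "(\<Sum>p\<in>F. (cmod (f p))^2) = (\<Sum>p\<in>\<phi> ` (\<phi> -` F). (cmod (f p))^2)"
    using F assms(3) by (intro sum.mono_neutral_right) auto
  also have "\<dots> = (\<Sum>j\<in>\<phi> -` F. (cmod (a j))^2)"
    using assms(1,4) by (subst sum.reindex) (auto intro: inj_on_subset)
  also have "\<dots> \<le> (\<Sum>j. (cmod (a j))^2)"
    using F assms(1,2) by (intro sum_le_suminf) (auto intro: finite_vimageI)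
  finally show "(\<Sum>p\<in>F. (cmod (f p))^2) \<le> (\<Sum>j. (cmod (a j))^2)" .
qed

lemma summable_norm_power_sq:
  assumes "cmod (l::complex) < 1"
  shows "summable (\<lambda>j. (cmod (l ^ j))^2)"
proof -
  have "(\<lambda>j. (cmod (l ^ j))^2) = (\<lambda>j. ((cmod l)^2) ^ j)"
    by (simp add: norm_power power_mult[symmetric] mult.commute)
  then show ?thesis
    using assms by (simp add: summable_geometric abs_square_less_1)
qed

lemma H2_exists_small_along_inj:
  fixes q :: "nat \<Rightarrow> nat \<times> nat"
  assumes "f \<in> H2" "inj q"
  shows "\<exists>n. cmod (f (q n)) < 1"
proof (rule ccontr)
  assume "\<nexists>n. cmod (f (q n)) < 1"
  then have "real N \<le> (\<Sum>n<N. (cmod (f (q n)))^2)" for N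
    using sum_mono[of "{..<N}" "\<lambda>_. 1::real" "\<lambda>n. (cmod (f (q n)))^2"]
    by (simp add: one_le_power not_less)
  also have "(\<Sum>n<N. (cmod (f (q n)))^2) \<le> sq_norm f" for N
    using assms by (intro sum_reindex_le_sq_norm) (auto intro: inj_on_subset)
  finally show False
    using reals_Archimedean2[of "sq_norm f"] not_less by blast
qed

lemma L2_set_norm_sum_le:
  fixes f :: "'i \<Rightarrow> 'a \<Rightarrow> 'b::real_normed_vector"
  shows "L2_set (\<lambda>p. norm (\<Sum>n\<in>N. f n p)) F \<le> (\<Sum>n\<in>N. L2_set (\<lambda>p. norm (f n p)) F)"
proof (induction N rule: infinite_finite_induct)
  case (insert n N)
  have "L2_set (\<lambda>p. norm (\<Sum>m\<in>insert n N. f m p)) F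
      \<le> L2_set (\<lambda>p. norm (f n p) + norm (\<Sum>m\<in>N. f m p)) F"
    using insert.hyps by (intro L2_set_mono) (simp_all add: norm_triangle_ineq)
  also have "\<dots> \<le> L2_set (\<lambda>p. norm (f n p)) F + L2_set (\<lambda>p. norm (\<Sum>m\<in>N. f m p)) F"
    by (rule L2_set_triangle_ineq)
  finally show ?case
    using insert by simp
qed (simp_all add: L2_set_def)

lemma H2_pointwise_limit:
  assumes lim: "\<And>p. (\<lambda>N. u N p) \<longlonglongrightarrow> f p"
    and bound: "\<And>N F. finite F \<Longrightarrow> (\<Sum>p\<in>F. (cmod (u N p))^2) \<le> B"
  shows "f \<in> H2"
proof (rule H2I)
  fix F :: "(nat \<times> nat) set"
  assume "finite F"
  have "(\<lambda>N. \<Sum>p\<in>F. (cmod (u N p))^2) \<longlonglongrightarrow> (\<Sum>p\<in>F. (cmod (f p))^2)"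
    by (intro tendsto_intros lim)
  then show "(\<Sum>p\<in>F. (cmod (f p))^2) \<le> B"
    by (rule LIMSEQ_le_const2) (use bound[OF \<open>finite F\<close>] in auto)
qed

lemma summable_H2_combination:
  assumes "\<And>n. u n \<in> H2" "\<And>n. sq_norm (u n) \<le> S" "summable (\<lambda>n. cmod (c n))"
  shows "summable (\<lambda>n. c n * u n p)"
proof (rule summable_comparison_test'[OF summable_mult2[OF assms(3), of "sqrt S"]])
  fix n
  have "cmod (u n p) \<le> sqrt S"
    using norm_le_sqrt_sq_norm[OF assms(1)] real_sqrt_le_mono[OF assms(2)] by (rule order_trans)
  then show "norm (c n * u n p) \<le> cmod (c n) * sqrt S"
    by (simp add: norm_mult mult_left_mono)
qed

lemma H2_combination:
  assumes u: "\<And>n. u n \<in> H2" "\<And>n. sq_norm (u n) \<le> S" and c: "summable (\<lambda>n. cmod (c n))"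
  shows "(\<lambda>p. \<Sum>n. c n * u n p) \<in> H2"
proof (rule H2_pointwise_limit)
  show "(\<lambda>N. \<Sum>n<N. c n * u n p) \<longlonglongrightarrow> (\<Sum>n. c n * u n p)" for p
    by (intro summable_LIMSEQ summable_H2_combination[OF u c])
  fix N and F :: "(nat \<times> nat) set"
  assume F: "finite F"
  have "L2_set (\<lambda>p. cmod (\<Sum>n<N. c n * u n p)) F \<le> (\<Sum>n<N. L2_set (\<lambda>p. cmod (c n * u n p)) F)"
    by (rule L2_set_norm_sum_le)
  also have "\<dots> \<le> (\<Sum>n<N. cmod (c n) * sqrt S)"
  proof (rule sum_mono)
    fix n
    have "L2_set (\<lambda>p. cmod (u n p)) F \<le> sqrt S"
      using sum_le_sq_norm[OF u(1) F] u(2)[of n] unfolding L2_set_def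
      by (meson order_trans real_sqrt_le_mono)
    then show "L2_set (\<lambda>p. cmod (c n * u n p)) F \<le> cmod (c n) * sqrt S"
      by (simp add: norm_mult L2_set_right_distrib[symmetric] mult_left_mono)
  qed
  also have "\<dots> \<le> (\<Sum>n. cmod (c n)) * sqrt S"
    unfolding sum_distrib_right[symmetric] using sq_norm_nonneg[of "u 0"] u(2)[of 0]
    by (intro mult_right_mono sum_le_suminf[OF c]) auto
  finally have "(L2_set (\<lambda>p. cmod (\<Sum>n<N. c n * u n p)) F)^2 \<le> ((\<Sum>n. cmod (c n)) * sqrt S)^2"
    by (simp add: power_mono)
  then show "(\<Sum>p\<in>F. (cmod (\<Sum>n<N. c n * u n p))^2) \<le> ((\<Sum>n. cmod (c n)) * sqrt S)^2"
    by (simp add: L2_set_def sum_nonneg)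
qed

section \<open>Composition operators\<close>

lemma sum_comp_op:
  assumes "inj_on t {p. P p}" "finite F"
  shows "(\<Sum>p\<in>F. (cmod (comp_op P t f p))^2) = (\<Sum>q\<in>t ` {p \<in> F. P p}. (cmod (f q))^2)"
proof -
  have "(\<Sum>p\<in>F. (cmod (comp_op P t f p))^2) = (\<Sum>p\<in>F. if P p then (cmod (f (t p)))^2 else 0)"
    by (intro sum.cong) (auto simp: comp_op_def)
  also have "\<dots> = (\<Sum>p\<in>{p \<in> F. P p}. (cmod (f (t p)))^2)"
    using assms(2) by (simp add: sum.inter_filter)
  also have "\<dots> = (\<Sum>q\<in>t ` {p \<in> F. P p}. (cmod (f q))^2)"
    using assms(1) by (subst sum.reindex) (auto intro: inj_on_subset)
  finally show ?thesis .
qed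

lemma sum_comp_op_le_sq_norm:
  assumes "inj_on t {p. P p}" "f \<in> H2" "finite F"
  shows "(\<Sum>p\<in>F. (cmod (comp_op P t f p))^2) \<le> sq_norm f"
  using assms by (simp add: sum_comp_op sum_le_sq_norm)

lemma comp_op_H2: "inj_on t {p. P p} \<Longrightarrow> f \<in> H2 \<Longrightarrow> comp_op P t f \<in> H2"
  by (rule H2I) (rule sum_comp_op_le_sq_norm)

lemma sq_norm_comp_op_le: "inj_on t {p. P p} \<Longrightarrow> f \<in> H2 \<Longrightarrow> sq_norm (comp_op P t f) \<le> sq_norm f"
  by (intro sq_norm_le comp_op_H2 sum_comp_op_le_sq_norm)

lemma shiftop_H2: "(\<And>f. f \<in> H2 \<Longrightarrow> T f \<in> H2) \<Longrightarrow> h \<in> H2 \<Longrightarrow> shiftop T l h \<in> H2"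
  unfolding shiftop_def by (intro H2_diff H2_scale)

lemma shiftop_zero: "shiftop (comp_op P t) l (\<lambda>_. 0) = (\<lambda>_. 0)"
  by (simp add: shiftop_def comp_op_def)

lemma inj_on_shiftop_comp_op:
  assumes inj: "inj_on t {p. P p}" and l: "1 < cmod l"
  shows "inj_on (shiftop (comp_op P t) l) H2"
proof (rule inj_onI)
  fix h1 h2
  assume h1: "h1 \<in> H2" and h2: "h2 \<in> H2"
    and eq: "shiftop (comp_op P t) l h1 = shiftop (comp_op P t) l h2"
  define d where "d = (\<lambda>k. h1 k - h2 k)"
  have d: "d \<in> H2" unfolding d_def using h1 h2 by (rule H2_diff)
  have "comp_op P t d k = l * d k" for k
    using fun_cong[OF eq, of k]
    by (cases "P k") (auto simp: shiftop_def comp_op_def d_def algebra_simps)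
  then have "comp_op P t d = (\<lambda>k. l * d k)" by blast
  then have "(cmod l)^2 * sq_norm d \<le> sq_norm d"
    using sq_norm_comp_op_le[OF inj d] by (simp add: sq_norm_scale)
  moreover have "1 < (cmod l)^2" using l by (simp add: one_less_power)
  ultimately have "sq_norm d = 0"
    using sq_norm_nonneg[of d] by (simp add: mult_le_cancel_right2)
  then show "h1 = h2"
    using sq_norm_eq_0[OF d] by (simp add: d_def fun_eq_iff)
qed

lemma shiftop_comp_op_surj:
  assumes inj: "inj_on t {p. P p}" and l: "1 < cmod l" and g: "g \<in> H2"
  shows "\<exists>h\<in>H2. shiftop (comp_op P t) l h = g"
proof -
  define T where "T = comp_op P t"
  define u where "u n = (T ^^ n) g" for n
  define c where "c n = (1 / l) ^ Suc n" for n
  have u_Suc: "u (Suc n) p = (if P p then u n (t p) else 0)" for n p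
    by (simp add: u_def T_def comp_op_def)
  have u: "u n \<in> H2 \<and> sq_norm (u n) \<le> sq_norm g" for n
  proof (induction n)
    case (Suc n)
    then show ?case
      using comp_op_H2[OF inj] sq_norm_comp_op_le[OF inj] by (auto simp: u_def T_def intro: order_trans)
  qed (simp add: u_def g)
  have "summable (\<lambda>n. (1 / cmod l) ^ Suc n)"
    using l by (simp add: summable_geometric divide_less_eq)
  then have c: "summable (\<lambda>n. cmod (c n))"
    by (simp add: c_def norm_power norm_divide)
  have u_H2: "u n \<in> H2" and u_norm: "sq_norm (u n) \<le> sq_norm g" for n
    using u by auto
  note summable_terms = summable_H2_combination[where u = u, OF u_H2 u_norm c]
  define h where "h p = - (\<Sum>n. c n * u n p)" for p
  have "shiftop T l h p = g p" for p
  proof -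
    have Th: "T h p = - (\<Sum>n. c n * u (Suc n) p)"
      by (simp add: T_def comp_op_def h_def u_Suc)
    have scaled: "(\<lambda>n. l * (c n * u n p)) = (\<lambda>n. (1 / l) ^ n * u n p)"
      using l by (auto simp: c_def fun_eq_iff)
    then have "summable (\<lambda>n. (1 / l) ^ n * u n p)"
      using summable_mult[OF summable_terms[of p], of l] by simp
    then have "(\<Sum>n. (1 / l) ^ n * u n p) = u 0 p + (\<Sum>n. c n * u (Suc n) p)"
      using suminf_split_head by (fastforce simp: c_def)
    moreover have "l * h p = - (\<Sum>n. (1 / l) ^ n * u n p)"
      using suminf_mult[OF summable_terms[of p], of l] by (simp add: h_def scaled)
    ultimately show ?thesis
      using Th by (simp add: shiftop_def u_def)
  qed
  moreover have "h \<in> H2"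
    unfolding h_def using H2_uminus[OF H2_combination[where u = u, OF u_H2 u_norm c]] .
  ultimately show ?thesis
    unfolding T_def by blast
qed

lemma bij_betw_shiftop_comp_op:
  assumes "inj_on t {p. P p}" "1 < cmod l"
  shows "bij_betw (shiftop (comp_op P t) l) H2 H2"
  unfolding bij_betw_def
  using assms inj_on_shiftop_comp_op shiftop_comp_op_surj shiftop_H2[OF comp_op_H2]
  by fast

section \<open>Koszul complexes of two operators\<close>

lemma kdelta1_image_eq_kernel_if_bij_first:
  assumes B_in: "\<And>h. h \<in> H \<Longrightarrow> B h \<in> H"
    and comm: "\<And>h. h \<in> H \<Longrightarrow> A (B h) = B (A h)"
    and bij: "bij_betw A H H"
  shows "kdelta1 A B ` H = {p \<in> H \<times> H. kdelta2 A B p = (\<lambda>_. 0)}"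
proof (intro equalityI subsetI)
  fix p
  assume "p \<in> {p \<in> H \<times> H. kdelta2 A B p = (\<lambda>_. 0)}"
  then obtain p1 p2 where p: "p = (p1, p2)" "p1 \<in> H" "p2 \<in> H" "kdelta2 A B (p1, p2) = (\<lambda>_. 0)"
    by (cases p) auto
  then have "A p2 = B p1"
    by (auto simp: kdelta2_def fun_eq_iff)
  obtain h where h: "h \<in> H" "p1 = A h"
    using bij p(2) by (auto simp: bij_betw_def)
  have "A (B h) = A p2"
    using comm[OF h(1)] h(2) \<open>A p2 = B p1\<close> by simp
  then have "B h = p2"
    using bij B_in[OF h(1)] p(3) by (auto simp: bij_betw_def dest: inj_onD)
  then show "p \<in> kdelta1 A B ` H"
    using h p(1) by (auto simp: kdelta1_def)
qed (use bij in \<open>auto simp: kdelta1_def kdelta2_def comm B_in bij_betw_def\<close>)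

lemma koszul_exact_if_bij_first:
  assumes zero_in: "(\<lambda>_. 0) \<in> H" and diff_in: "\<And>f g. f \<in> H \<Longrightarrow> g \<in> H \<Longrightarrow> (\<lambda>k. f k - g k) \<in> H"
    and B_in: "\<And>h. h \<in> H \<Longrightarrow> B h \<in> H"
    and A0: "A (\<lambda>_. 0) = (\<lambda>_. 0)" and B0: "B (\<lambda>_. 0) = (\<lambda>_. 0)"
    and comm: "\<And>h. h \<in> H \<Longrightarrow> A (B h) = B (A h)"
    and bij: "bij_betw A H H"
  shows "koszul_exact H A B"
proof -
  have "{h \<in> H. kdelta1 A B h = ((\<lambda>_. 0), (\<lambda>_. 0))} = {(\<lambda>_. 0)}"
  proof (intro equalityI subsetI)
    fix h
    assume "h \<in> {h \<in> H. kdelta1 A B h = ((\<lambda>_. 0), (\<lambda>_. 0))}"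
    then have "h \<in> H" "A h = A (\<lambda>_. 0)"
      by (auto simp: kdelta1_def A0)
    then show "h \<in> {(\<lambda>_. 0)}"
      using bij zero_in by (auto simp: bij_betw_def dest: inj_onD)
  qed (use zero_in A0 B0 in \<open>auto simp: kdelta1_def\<close>)
  moreover have "kdelta2 A B ` (H \<times> H) = H"
  proof (intro equalityI subsetI)
    fix g
    assume "g \<in> H"
    then obtain h where "h \<in> H" "g = A h"
      using bij by (auto simp: bij_betw_def)
    then have "g = kdelta2 A B ((\<lambda>_. 0), h)"
      by (simp add: kdelta2_def B0)
    then show "g \<in> kdelta2 A B ` (H \<times> H)"
      using zero_in \<open>h \<in> H\<close> by blast
  qed (use bij in \<open>auto simp: kdelta2_def bij_betw_def intro!: diff_in B_in\<close>)
  ultimately show ?thesis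
    using kdelta1_image_eq_kernel_if_bij_first[where A = A and B = B, OF B_in comm bij]
    by (simp add: koszul_exact_def koszul_breaks_at_def)
qed

lemma koszul_breaks_at_swap:
  assumes neg_in: "\<And>f. f \<in> H \<Longrightarrow> (\<lambda>k. - f k) \<in> H"
  shows "koszul_breaks_at H B A n = koszul_breaks_at H A B n"
proof -
  define neg :: "vec \<Rightarrow> vec" where "neg f = (\<lambda>k. - f k)" for f
  have inj_swap: "inj (prod.swap :: vec \<times> vec \<Rightarrow> _)" and inj_neg: "inj neg"
    by (auto intro!: injI simp: neg_def fun_eq_iff)
  have stage1: "{h \<in> H. kdelta1 B A h = ((\<lambda>_. 0), (\<lambda>_. 0))}
      = {h \<in> H. kdelta1 A B h = ((\<lambda>_. 0), (\<lambda>_. 0))}"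
    by (auto simp: kdelta1_def)
  have image1: "kdelta1 B A ` H = prod.swap ` kdelta1 A B ` H"
    by (auto simp: kdelta1_def image_image)
  have ker_swap: "kdelta2 B A (p1, p2) = (\<lambda>_. 0) \<longleftrightarrow> kdelta2 A B (p2, p1) = (\<lambda>_. 0)" for p1 p2
    by (auto simp: kdelta2_def fun_eq_iff)
  have ker2: "{p \<in> H \<times> H. kdelta2 B A p = (\<lambda>_. 0)} = prod.swap ` {p \<in> H \<times> H. kdelta2 A B p = (\<lambda>_. 0)}"
  proof (rule set_eqI)
    fix p :: "vec \<times> vec"
    show "p \<in> {p \<in> H \<times> H. kdelta2 B A p = (\<lambda>_. 0)}
        \<longleftrightarrow> p \<in> prod.swap ` {p \<in> H \<times> H. kdelta2 A B p = (\<lambda>_. 0)}"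
      by (cases p) (simp add: ker_swap conj_commute)
  qed
  have stage2: "(kdelta1 B A ` H \<noteq> {p \<in> H \<times> H. kdelta2 B A p = (\<lambda>_. 0)})
      = (kdelta1 A B ` H \<noteq> {p \<in> H \<times> H. kdelta2 A B p = (\<lambda>_. 0)})"
    unfolding image1 ker2 inj_image_eq_iff[OF inj_swap] ..
  have image2: "kdelta2 B A ` (H \<times> H) = neg ` kdelta2 A B ` (H \<times> H)"
    by (force simp: kdelta2_def neg_def image_image)
  have "neg ` H = H"
    using neg_in by (force simp: neg_def image_iff fun_eq_iff)
  then have stage3: "(kdelta2 B A ` (H \<times> H) \<noteq> H) = (kdelta2 A B ` (H \<times> H) \<noteq> H)"
    using image2 inj_image_eq_iff[OF inj_neg] by metis
  show ?thesis
    by (simp add: koszul_breaks_at_def stage1 stage2 stage3)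
qed

lemma koszul_breaks_at_2I:
  assumes "p \<in> H \<times> H" "kdelta2 A B p = (\<lambda>_. 0)" "p \<notin> kdelta1 A B ` H"
  shows "koszul_breaks_at H A B 2"
  using assms by (auto simp: koszul_breaks_at_def)

lemma koszul_breaks_at_3I:
  assumes "g \<in> H" "g \<notin> kdelta2 A B ` (H \<times> H)"
  shows "koszul_breaks_at H A B 3"
  using assms by (auto simp: koszul_breaks_at_def)

section \<open>Exactness outside the closed bidisc\<close>

lemma shiftop_tau_commute: "shiftop tau1 l1 (shiftop tau2 l2 h) = shiftop tau2 l2 (shiftop tau1 l1 h)"
proof -
  have "tau1 (shiftop tau2 l2 h) = (\<lambda>k. tau1 (tau2 h) k - l2 * tau1 h k)"
    and "tau2 (shiftop tau1 l1 h) = (\<lambda>k. tau2 (tau1 h) k - l1 * tau2 h k)"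
    by (auto simp: shiftop_def tau1_eq_comp_op tau2_eq_comp_op comp_op_def)
  then show ?thesis
    by (simp add: shiftop_def tau1_tau2_commute fun_eq_iff algebra_simps)
qed

lemma koszul_exact_outside_closed_bidisc:
  assumes "1 < cmod l1 \<or> 1 < cmod l2"
  shows "koszul_exact H2 (shiftop tau1 l1) (shiftop tau2 l2)"
proof -
  have maps1: "shiftop tau1 l1 h \<in> H2" if "h \<in> H2" for h
    unfolding tau1_eq_comp_op using that by (intro shiftop_H2 comp_op_H2 inj_on_tau1_index)
  have maps2: "shiftop tau2 l2 h \<in> H2" if "h \<in> H2" for h
    unfolding tau2_eq_comp_op using that by (intro shiftop_H2 comp_op_H2 inj_on_tau2_index)
  have zero: "shiftop tau1 l1 (\<lambda>_. 0) = (\<lambda>_. 0)" "shiftop tau2 l2 (\<lambda>_. 0) = (\<lambda>_. 0)"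
    by (simp_all add: tau1_eq_comp_op tau2_eq_comp_op shiftop_zero)
  from assms show ?thesis
  proof
    assume "1 < cmod l1"
    then have "bij_betw (shiftop tau1 l1) H2 H2"
      unfolding tau1_eq_comp_op by (rule bij_betw_shiftop_comp_op[OF inj_on_tau1_index])
    then show ?thesis
      using maps1 maps2 zero shiftop_tau_commute
      by (intro koszul_exact_if_bij_first[OF H2_zero H2_diff]) simp_all
  next
    assume "1 < cmod l2"
    then have "bij_betw (shiftop tau2 l2) H2 H2"
      unfolding tau2_eq_comp_op by (rule bij_betw_shiftop_comp_op[OF inj_on_tau2_index])
    then have "koszul_exact H2 (shiftop tau2 l2) (shiftop tau1 l1)"
      using maps1 maps2 zero shiftop_tau_commute
      by (intro koszul_exact_if_bij_first[OF H2_zero H2_diff]) simp_all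
    then show ?thesis
      using koszul_breaks_at_swap[OF H2_uminus, where A = "shiftop tau1 l1" and B = "shiftop tau2 l2"]
      by (simp add: koszul_exact_def)
  qed
qed

section \<open>The open bidisc\<close>

lemma shiftop_forward_shift_ne:
  fixes T :: "vec \<Rightarrow> vec" and q :: "nat \<Rightarrow> nat \<times> nat"
  assumes q: "inj q" and T0: "\<And>f. T f (q 0) = 0" and T_Suc: "\<And>f n. T f (q (Suc n)) = f (q n)"
    and l: "cmod l < 1" and h: "h \<in> H2"
    and g0: "g (q 0) = 1" and g_Suc: "\<And>n. g (q (Suc n)) = 0"
  shows "shiftop T l h \<noteq> g"
proof
  assume hg: "shiftop T l h = g"
  have "- (l * h (q 0)) = 1"
    using fun_cong[OF hg, of "q 0"] by (simp add: shiftop_def T0 g0)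
  then have "cmod l * cmod (h (q 0)) = 1"
    by (metis norm_minus_cancel norm_mult norm_one)
  then have h0: "1 \<le> cmod (h (q 0))"
    using mult_left_le_one_le[of "cmod (h (q 0))" "cmod l"] l by simp
  have rec: "h (q n) = l * h (q (Suc n))" for n
    using fun_cong[OF hg, of "q (Suc n)"] by (simp add: shiftop_def T_Suc g_Suc)
  have step: "cmod (h (q n)) \<le> cmod (h (q (Suc n)))" for n
    using rec[of n] l by (simp add: norm_mult mult_left_le_one_le)
  have ge: "1 \<le> cmod (h (q n))" for n
  proof (induction n)
    case (Suc n)
    then show ?case using step[of n] by linarith
  qed (rule h0)
  obtain n where "cmod (h (q n)) < 1"
    using H2_exists_small_along_inj[OF h q] by blast
  then show False
    using ge[of n] by linarith
qed

lemma koszul_breaks_at_2_in_open_bidisc: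
  assumes l1: "cmod l1 < 1" and l2: "cmod l2 < 1"
  shows "koszul_breaks_at H2 (shiftop tau1 l1) (shiftop tau2 l2) 2"
proof -
  define e :: vec where "e p = (if p = (0, 1) then 1 else 0)" for p
  define x :: vec where "x p = (if snd p = 0 then l1 ^ fst p else 0)" for p
  define z :: vec where "z p = (if fst p = 0 \<and> 2 \<le> snd p then l2 ^ (snd p - 2) else 0)" for p
  have x: "x \<in> H2"
    using summable_norm_power_sq[OF l1]
    by (intro H2_supported_on_range[where \<phi> = "\<lambda>j. (j, 0)" and a = "\<lambda>j. l1 ^ j"])
      (auto simp: x_def inj_def image_iff)
  have z: "z \<in> H2"
    using summable_norm_power_sq[OF l2]
    by (intro H2_supported_on_range[where \<phi> = "\<lambda>j. (0, j + 2)" and a = "\<lambda>j. l2 ^ j"])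
      (auto simp: z_def inj_def image_iff dest!: le_Suc_ex)
  have x_e: "shiftop tau1 l1 x = e"
    by (auto simp: fun_eq_iff shiftop_def tau1_apply x_def e_def)
  have z_e: "shiftop tau2 l2 z = e"
  proof
    fix p :: "nat \<times> nat"
    obtain m1 m2 where p: "p = (m1, m2)" by fastforce
    consider "m2 = 0" | "m2 = 1" | k where "m2 = Suc (Suc k)"
      using nat.exhaust by (metis One_nat_def)
    then show "shiftop tau2 l2 z p = e p"
      by cases (auto simp: p shiftop_def tau2_apply z_def e_def)
  qed
  have not_boundary: "shiftop tau1 l1 h \<noteq> z" if "h \<in> H2" for h
    by (rule shiftop_forward_shift_ne[where q = "\<lambda>n. (n, 2 * n + 2)"])
      (simp_all add: inj_def tau1_apply z_def l1 that)
  show ?thesis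
  proof (rule koszul_breaks_at_2I[where p = "(z, x)"])
    show "(z, x) \<in> H2 \<times> H2"
      using x z by simp
    show "kdelta2 (shiftop tau1 l1) (shiftop tau2 l2) (z, x) = (\<lambda>_. 0)"
      using x_e z_e by (simp add: kdelta2_def)
    show "(z, x) \<notin> kdelta1 (shiftop tau1 l1) (shiftop tau2 l2) ` H2"
      using not_boundary by (auto simp: kdelta1_def)
  qed
qed

section \<open>A square-summable sequence with slowly growing partial sums\<close>

definition slow_decay :: "nat \<Rightarrow> real" where
  "slow_decay j = (real j + 1) powr (-3/4)"

lemma summable_slow_decay_sq: "summable (\<lambda>j. (slow_decay j)^2)"
proof -
  have "(slow_decay j)^2 = real (Suc j) powr (-3/2)" for j
    by (simp add: slow_decay_def powr_power add.commute)
  moreover have "summable (\<lambda>j. real (Suc j) powr (-3/2))"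
    using summable_Suc_iff[of "\<lambda>n. real n powr (-3/2)"] by (simp add: summable_real_powr_iff)
  ultimately show ?thesis by simp
qed

lemma sum_slow_decay_ge:
  assumes x: "0 < x" and I: "real I = x ^ 4"
  shows "x \<le> (\<Sum>j<I. slow_decay j)"
proof -
  have "0 < I"
    using x I by (metis of_nat_0_less_iff zero_less_power)
  have "x = (x powr 4) powr (1/4)"
    using x by (simp only: powr_powr) simp
  also have "\<dots> = (\<Sum>j<I. real I powr (-3/4))"
    using powr_realpow[OF x, of 4] I \<open>0 < I\<close> by (simp add: powr_mult_base)
  also have "\<dots> \<le> (\<Sum>j<I. slow_decay j)"
    unfolding slow_decay_def by (intro sum_mono powr_mono2') auto
  finally show ?thesis .
qed

lemma norm_sum_le_twisted_telescoping:
  fixes \<mu> :: complex and c w e :: "nat \<Rightarrow> complex"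
  assumes \<mu>: "cmod \<mu> = 1" and rel: "\<And>j. \<mu> ^ Suc j * c j = w (Suc j) - \<mu> * w j + e j"
  shows "cmod (\<Sum>j<I. c j) \<le> cmod (w I) + cmod (w 0) + (\<Sum>j<I. cmod (e j))"
proof -
  define v where "v j = w j / \<mu> ^ j" for j
  have "\<mu> \<noteq> 0" using \<mu> by auto
  then have "c j = v (Suc j) - v j + e j / \<mu> ^ Suc j" for j
    using rel[of j] by (simp add: v_def field_simps)
  then have "(\<Sum>j<I. c j) = v I - v 0 + (\<Sum>j<I. e j / \<mu> ^ Suc j)"
    by (simp add: sum.distrib sum_lessThan_telescope)
  also have "cmod \<dots> \<le> cmod (v I - v 0) + cmod (\<Sum>j<I. e j / \<mu> ^ Suc j)"
    by (rule norm_triangle_ineq)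
  also have "\<dots> \<le> cmod (v I) + cmod (v 0) + (\<Sum>j<I. cmod (e j / \<mu> ^ Suc j))"
    by (intro add_mono norm_triangle_ineq4 norm_sum)
  finally show ?thesis
    by (simp add: v_def norm_divide norm_mult norm_power \<mu>)
qed

(* On the window j < (M+1)^2 t^4 the partial sum of slow_decay is at least t sqrt(M+1), which
   exceeds the boundary terms 2 sqrt(C (M+1)) by sqrt(M+1); Cauchy-Schwarz turns this excess into
   the lower bound for the errors. *)
lemma sum_sq_twisted_telescoping_error_ge:
  fixes \<mu> :: complex and w e :: "nat \<Rightarrow> complex" and M t :: nat
  assumes \<mu>: "cmod \<mu> = 1" and rel: "\<And>j. \<mu> ^ Suc j * slow_decay j = w (Suc j) - \<mu> * w j + e j"
    and w: "\<And>j. (cmod (w j))^2 \<le> C * (real M + 1)"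
    and t: "2 * sqrt C + 1 \<le> real t" and t0: "0 < t"
  shows "1 \<le> real t ^ 4 * (real M + 1) * (\<Sum>j<(M + 1)^2 * t^4. (cmod (e j))^2)"
proof -
  define I where "I = (M + 1)^2 * t^4"
  define a where "a = sqrt (real M + 1)"
  have a: "0 < a" "a^2 = real M + 1" by (simp_all add: a_def)
  have "a ^ 4 = (real M + 1)^2"
    unfolding a(2)[symmetric] by (simp flip: power_mult)
  then have I: "real I = (a * real t) ^ 4"
    by (simp add: I_def power_mult_distrib)
  have "a * real t \<le> (\<Sum>j<I. slow_decay j)"
    using a t0 I by (intro sum_slow_decay_ge) simp_all
  also have "\<dots> = cmod (\<Sum>j<I. complex_of_real (slow_decay j))"
    unfolding of_real_sum[symmetric] norm_of_real by (simp add: abs_of_nonneg sum_nonneg slow_decay_def)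
  also have "\<dots> \<le> cmod (w I) + cmod (w 0) + (\<Sum>j<I. cmod (e j))"
    using rel by (rule norm_sum_le_twisted_telescoping[OF \<mu>])
  also have "\<dots> \<le> 2 * (sqrt C * a) + (\<Sum>j<I. cmod (e j))"
    using real_le_rsqrt[OF w[of I]] real_le_rsqrt[OF w[of 0]] by (simp add: a_def real_sqrt_mult)
  finally have "a * real t \<le> 2 * (sqrt C * a) + (\<Sum>j<I. cmod (e j))" .
  moreover have "a * (2 * sqrt C + 1) \<le> a * real t"
    using t a by (intro mult_left_mono) auto
  moreover have "a * (2 * sqrt C + 1) = 2 * (sqrt C * a) + a"
    by (simp add: algebra_simps)
  ultimately have "a \<le> (\<Sum>j<I. cmod (e j))"
    by linarith
  then have "a^2 \<le> (\<Sum>j<I. cmod (e j))^2"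
    using a(1) by (intro power_mono) auto
  also have "\<dots> \<le> (\<Sum>j<I. (cmod (e j))^2) * real I"
    using sum_squared_le_sum_of_squares[of "\<lambda>j. cmod (e j)" "{..<I}"] by simp
  also have "\<dots> = a^2 * (a^2 * real t ^ 4 * (\<Sum>j<I. (cmod (e j))^2))"
    unfolding I by (simp add: power_mult_distrib mult_ac flip: power_add)
  finally have "a^2 * 1 \<le> a^2 * (a^2 * real t ^ 4 * (\<Sum>j<I. (cmod (e j))^2))"
    by simp
  then show ?thesis
    using a by (simp add: I_def mult_le_cancel_left_pos mult_ac)
qed

lemma slow_decay_not_twisted_telescoping:
  fixes \<mu> :: complex and W E :: "nat \<Rightarrow> nat \<Rightarrow> complex"
  assumes \<mu>: "cmod \<mu> = 1"
    and rel: "\<And>M j. \<mu> ^ Suc j * slow_decay j = W M (Suc j) - \<mu> * W M j + E M j"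
    and W: "\<And>M j. (cmod (W M j))^2 \<le> C * (real M + 1)"
    and E: "\<And>N I. (\<Sum>M<N. \<Sum>j<I M. (cmod (E M j))^2) \<le> D"
  shows False
proof -
  obtain n :: nat where n: "2 * sqrt C + 1 \<le> real n"
    using real_arch_simple by blast
  define t where "t = Suc n"
  have t: "2 * sqrt C + 1 \<le> real t" "0 < t"
    using n by (simp_all add: t_def)
  define s where "s M = (\<Sum>j<(M + 1)^2 * t^4. (cmod (E M j))^2)" for M
  have row: "1 / (real M + 1) \<le> real t ^ 4 * s M" for M
    using sum_sq_twisted_telescoping_error_ge[OF \<mu> rel W t, of M]
    by (simp add: s_def divide_le_eq mult_ac)
  have "(\<Sum>M<N. 1 / (real M + 1)) \<le> real t ^ 4 * D" for N
  proof -
    have "(\<Sum>M<N. 1 / (real M + 1)) \<le> real t ^ 4 * (\<Sum>M<N. s M)"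
      unfolding sum_distrib_left by (intro sum_mono row)
    also have "\<dots> \<le> real t ^ 4 * D"
      using E[where N = N and I = "\<lambda>M. (M + 1)^2 * t^4"] by (intro mult_left_mono) (simp_all add: s_def)
    finally show ?thesis .
  qed
  then have "summable (\<lambda>M. 1 / (real M + 1))"
    by (intro summableI_nonneg_bounded) auto
  then have "summable (\<lambda>n. inverse (real n))"
    using summable_Suc_iff[of "\<lambda>n. inverse (real n)"] by (simp add: divide_inverse add.commute)
  then show False
    using not_summable_harmonic by blast
qed

section \<open>The boundary of the bidisc\<close>

lemma sum_power_grid_telescope:
  fixes \<alpha> \<beta> :: complex and G X Y :: "nat \<Rightarrow> nat \<Rightarrow> complex"
  assumes "\<And>a. G a j = ((if a = 0 then 0 else X (a - 1) j) - \<alpha> * X a j) - (Y a (Suc j) - \<beta> * Y a j)"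
  shows "(\<Sum>a<Suc M. \<alpha> ^ a * G a j)
    = - (\<alpha> ^ Suc M * X M j) - ((\<Sum>a<Suc M. \<alpha> ^ a * Y a (Suc j)) - \<beta> * (\<Sum>a<Suc M. \<alpha> ^ a * Y a j))"
  by (induction M) (simp_all add: assms algebra_simps sum_distrib_left)

lemma norm_power_mult_le:
  fixes \<alpha> z :: complex
  assumes "cmod \<alpha> \<le> 1"
  shows "cmod (\<alpha> ^ n * z) \<le> cmod z"
  using assms by (simp add: norm_mult norm_power power_le_one mult_left_le_one_le)

lemma norm_sum_power_sq_le:
  fixes \<alpha> :: complex
  assumes "cmod \<alpha> \<le> 1" "f \<in> H2" "inj \<phi>"
  shows "(cmod (\<Sum>a<Suc M. \<alpha> ^ a * f (\<phi> a)))^2 \<le> sq_norm f * (real M + 1)"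
proof -
  have "cmod (\<Sum>a<Suc M. \<alpha> ^ a * f (\<phi> a)) \<le> (\<Sum>a<Suc M. cmod (\<alpha> ^ a * f (\<phi> a)))"
    by (rule norm_sum)
  also have "\<dots> \<le> (\<Sum>a<Suc M. cmod (f (\<phi> a)))"
    by (intro sum_mono norm_power_mult_le[OF assms(1)])
  finally have "cmod (\<Sum>a<Suc M. \<alpha> ^ a * f (\<phi> a)) \<le> (\<Sum>a<Suc M. cmod (f (\<phi> a)))" .
  then have "(cmod (\<Sum>a<Suc M. \<alpha> ^ a * f (\<phi> a)))^2 \<le> (\<Sum>a<Suc M. cmod (f (\<phi> a)))^2"
    by (simp add: power_mono)
  also have "\<dots> \<le> (\<Sum>a<Suc M. (cmod (f (\<phi> a)))^2) * (real M + 1)"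
    using sum_squared_le_sum_of_squares[of "\<lambda>a. cmod (f (\<phi> a))" "{..<Suc M}"]
    by (simp add: add.commute del: sum.lessThan_Suc)
  also have "\<dots> \<le> sq_norm f * (real M + 1)"
    using assms(2,3) by (intro mult_right_mono sum_reindex_le_sq_norm) (auto intro: inj_on_subset)
  finally show ?thesis .
qed

lemma sum_sum_power_sq_le:
  fixes \<alpha> :: complex and \<phi> :: "nat \<Rightarrow> nat \<Rightarrow> nat \<times> nat"
  assumes "cmod \<alpha> \<le> 1" "f \<in> H2" "inj (case_prod \<phi>)"
  shows "(\<Sum>M<N. \<Sum>j<I M. (cmod (\<alpha> ^ Suc M * f (\<phi> M j)))^2) \<le> sq_norm f"
proof -
  have "(\<Sum>M<N. \<Sum>j<I M. (cmod (\<alpha> ^ Suc M * f (\<phi> M j)))^2)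
      \<le> (\<Sum>M<N. \<Sum>j<I M. (cmod (f (\<phi> M j)))^2)"
    by (intro sum_mono power_mono norm_power_mult_le[OF assms(1)]) simp
  also have "\<dots> = (\<Sum>x\<in>Sigma {..<N} (\<lambda>M. {..<I M}). (cmod (f (case_prod \<phi> x)))^2)"
    by (simp add: sum.Sigma split_def)
  also have "\<dots> \<le> sq_norm f"
    using assms(2,3) by (intro sum_reindex_le_sq_norm) (auto intro: inj_on_subset)
  finally show ?thesis .
qed

lemma shiftop_diff_ne_slow_decay_edge:
  fixes A B :: "vec \<Rightarrow> vec" and \<phi> :: "nat \<Rightarrow> nat \<Rightarrow> nat \<times> nat"
  assumes inj: "inj (case_prod \<phi>)"
    and A: "\<And>f a j. A f (\<phi> a j) = (if a = 0 then 0 else f (\<phi> (a - 1) j))"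
    and B: "\<And>f a j. B f (\<phi> a j) = f (\<phi> a (Suc j))"
    and \<alpha>: "cmod \<alpha> \<le> 1" and \<beta>: "cmod \<beta> = 1"
    and g: "\<And>a j. g (\<phi> a j) = (if a = 0 then - (\<beta> ^ Suc j * slow_decay j) else 0)"
    and x: "x \<in> H2" and y: "y \<in> H2"
  shows "(\<lambda>k. shiftop A \<alpha> x k - shiftop B \<beta> y k) \<noteq> g"
proof
  assume eq: "(\<lambda>k. shiftop A \<alpha> x k - shiftop B \<beta> y k) = g"
  define W where "W M j = (\<Sum>a<Suc M. \<alpha> ^ a * y (\<phi> a j))" for M j
  define E where "E M j = \<alpha> ^ Suc M * x (\<phi> M j)" for M j
  have g_eq: "g (\<phi> a j) = ((if a = 0 then 0 else x (\<phi> (a - 1) j)) - \<alpha> * x (\<phi> a j))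
      - (y (\<phi> a (Suc j)) - \<beta> * y (\<phi> a j))" for a j
    using fun_cong[OF eq, of "\<phi> a j"] by (simp add: shiftop_def A B)
  have "\<beta> ^ Suc j * slow_decay j = W M (Suc j) - \<beta> * W M j + E M j" for M j
  proof -
    have "(\<Sum>a<Suc M. \<alpha> ^ a * g (\<phi> a j))
        = (\<Sum>a<Suc M. if a = 0 then - (\<beta> ^ Suc j * slow_decay j) else 0)"
      by (intro sum.cong) (simp_all add: g)
    then have "- (\<beta> ^ Suc j * slow_decay j) = (\<Sum>a<Suc M. \<alpha> ^ a * g (\<phi> a j))"
      by (simp del: sum.lessThan_Suc)
    also have "\<dots> = - E M j - (W M (Suc j) - \<beta> * W M j)"
      unfolding W_def E_def using g_eq
      by (rule sum_power_grid_telescope[where G = "\<lambda>a j. g (\<phi> a j)" and X = "\<lambda>a j. x (\<phi> a j)"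
            and Y = "\<lambda>a j. y (\<phi> a j)"])
    finally show ?thesis
      by (simp add: algebra_simps)
  qed
  moreover have "(cmod (W M j))^2 \<le> sq_norm y * (real M + 1)" for M j
    unfolding W_def using inj by (intro norm_sum_power_sq_le[OF \<alpha> y]) (auto simp: inj_def)
  moreover have "(\<Sum>M<N. \<Sum>j<I M. (cmod (E M j))^2) \<le> sq_norm x" for N I
    unfolding E_def by (rule sum_sum_power_sq_le[OF \<alpha> x inj])
  ultimately show False
    by (rule slow_decay_not_twisted_telescoping[OF \<beta>])
qed

lemma koszul_breaks_at_3_of_grid_shifts:
  fixes A B :: "vec \<Rightarrow> vec" and \<phi> :: "nat \<Rightarrow> nat \<Rightarrow> nat \<times> nat"
  assumes inj: "inj (case_prod \<phi>)"
    and A: "\<And>f a j. A f (\<phi> a j) = (if a = 0 then 0 else f (\<phi> (a - 1) j))"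
    and B: "\<And>f a j. B f (\<phi> a j) = f (\<phi> a (Suc j))"
    and \<alpha>: "cmod \<alpha> \<le> 1" and \<beta>: "cmod \<beta> = 1"
  shows "koszul_breaks_at H2 (shiftop A \<alpha>) (shiftop B \<beta>) 3"
proof (rule koszul_breaks_at_3I)
  have inj0: "inj (\<phi> 0)"
    using inj by (auto simp: inj_def)
  define g :: vec where
    "g p = (if p \<in> range (\<phi> 0) then - (\<beta> ^ Suc (inv (\<phi> 0) p) * slow_decay (inv (\<phi> 0) p)) else 0)" for p
  show "g \<in> H2"
    using summable_slow_decay_sq
    by (intro H2_supported_on_range[OF inj0, where a = "\<lambda>j. - (\<beta> ^ Suc j * slow_decay j)"])
      (auto simp: g_def norm_mult norm_power \<beta> inv_f_f[OF inj0])
  have g_grid: "g (\<phi> a j) = (if a = 0 then - (\<beta> ^ Suc j * slow_decay j) else 0)" for a j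
    using inj by (auto simp: g_def inj_def)
  show "g \<notin> kdelta2 (shiftop A \<alpha>) (shiftop B \<beta>) ` (H2 \<times> H2)"
  proof
    assume "g \<in> kdelta2 (shiftop A \<alpha>) (shiftop B \<beta>) ` (H2 \<times> H2)"
    then obtain y x where "y \<in> H2" "x \<in> H2" "kdelta2 (shiftop A \<alpha>) (shiftop B \<beta>) (y, x) = g"
      by auto
    then show False
      using shiftop_diff_ne_slow_decay_edge[OF inj A B \<alpha> \<beta> g_grid] by (simp add: kdelta2_def)
  qed
qed

lemma koszul_breaks_at_3_on_boundary:
  assumes "cmod l1 \<le> 1" "cmod l2 \<le> 1" "cmod l1 = 1 \<or> cmod l2 = 1"
  shows "koszul_breaks_at H2 (shiftop tau1 l1) (shiftop tau2 l2) 3"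
  using assms(3)
proof
  assume "cmod l2 = 1"
  moreover have "tau1 f (a, 2 * a + 2 + j) = (if a = 0 then 0 else f (a - 1, 2 * (a - 1) + 2 + j))"
    for f a j
    by (cases a) (simp_all add: tau1_apply)
  ultimately show ?thesis
    by (intro koszul_breaks_at_3_of_grid_shifts[where \<phi> = "\<lambda>a j. (a, 2 * a + 2 + j)"] assms(1))
      (auto simp: inj_def tau2_apply)
next
  assume "cmod l1 = 1"
  moreover have "tau2 f (j + 2 * a, a) = (if a = 0 then 0 else f (j + 2 * (a - 1), a - 1))"
    for f a j
    by (cases a) (simp_all add: tau2_apply)
  ultimately have "koszul_breaks_at H2 (shiftop tau2 l2) (shiftop tau1 l1) 3"
    by (intro koszul_breaks_at_3_of_grid_shifts[where \<phi> = "\<lambda>a j. (j + 2 * a, a)"] assms(2))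
      (auto simp: inj_def tau1_apply)
  then show ?thesis
    using koszul_breaks_at_swap[OF H2_uminus, where A = "shiftop tau1 l1" and B = "shiftop tau2 l2"]
    by simp
qed

theorem proposition3p4:
  shows "taylor_spectrum H2 tau1 tau2 = cball 0 1 \<times> cball 0 1
    \<and> (\<forall>l1 l2. cmod l1 < 1 \<and> cmod l2 < 1 \<longrightarrow>
          koszul_breaks_at H2 (shiftop tau1 l1) (shiftop tau2 l2) 2)"
proof
  have "\<not> koszul_exact H2 (shiftop tau1 l1) (shiftop tau2 l2) \<longleftrightarrow> cmod l1 \<le> 1 \<and> cmod l2 \<le> 1"
    for l1 l2
  proof
    assume "\<not> koszul_exact H2 (shiftop tau1 l1) (shiftop tau2 l2)"
    then show "cmod l1 \<le> 1 \<and> cmod l2 \<le> 1"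
      using koszul_exact_outside_closed_bidisc[of l1 l2] by (meson not_le)
  next
    assume "cmod l1 \<le> 1 \<and> cmod l2 \<le> 1"
    then have "koszul_breaks_at H2 (shiftop tau1 l1) (shiftop tau2 l2) 2
        \<or> koszul_breaks_at H2 (shiftop tau1 l1) (shiftop tau2 l2) 3"
      using koszul_breaks_at_2_in_open_bidisc koszul_breaks_at_3_on_boundary by force
    then show "\<not> koszul_exact H2 (shiftop tau1 l1) (shiftop tau2 l2)"
      unfolding koszul_exact_def by blast
  qed
  then show "taylor_spectrum H2 tau1 tau2 = cball 0 1 \<times> cball 0 1"
    by (auto simp: taylor_spectrum_def)
  show "\<forall>l1 l2. cmod l1 < 1 \<and> cmod l2 < 1 \<longrightarrow>
      koszul_breaks_at H2 (shiftop tau1 l1) (shiftop tau2 l2) 2"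
    using koszul_breaks_at_2_in_open_bidisc by blast
qed

end
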